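(* Let $\mathcal{Z}_0$ be the signaling scheme output by the Split-and-Match procedure on $\mathcal{D}$. Then for every $k\in[n]$, \[4\int_0^{F_{\mathcal{D}}(v_k)} s_{\mathcal{Z}_0}(x)\,dx\ \ge\ V_k-\max_{i\in[k]}\Big\{v_i\sum_{j=i}^k f_{\mathcal{D}}(v_j)\Big\},\qquad V_k=\sum_{i=1}^k v_i f_{\mathcal{D}}(v_i).\]
   Context: Values and prior. $0<v_1<\dots<v_n$ are reals, and $v_0:=0$. $\mathcal{D}$ is a distribution on $\{v_1,\dots,v_n\}$ with $f_{\mathcal{D}}(v_i)>0$ and CDF $F_{\mathcal{D}}$. Signals and pricing. A signal is a distribution $S$ on these values, with $G_S(p)=\Pr_{v\sim S}[v\ge p]$. The seller posts $p^*_S$, the smallest $v$ in the support of $S$ maximizing $v\,G_S(v)$. The surplus of value $v$ is $cs_v(S)=\mathbb{1}[v\ge p^*_S](v-p^*_S)$. Signaling schemes. A signaling scheme is $\mathcal{Z}=\{(S_q,\gamma_q)\}_{q\in[Q]}$ with $\gamma_q\ge0$, $\sum\gamma_q=1$ and $\sum_q\gamma_q f_{S_q}=f_{\mathcal{D}}$. Its expected consumer surplus at $v_i$ is $cs_{v_i}(\mathcal{Z})=\sum_q cs_{v_i}(S_q)\gamma_q f_{S_q}(v_i)/f_{\mathcal{D}}(v_i)$. The surplus-mass function $s_{\mathcal{Z}}$ on $(0,1]$ equals $cs_{v_i}(\mathcal{Z})$ on $(F_{\mathcal{D}}(v_{i-1}),F_{\mathcal{D}}(v_i)]$. Special signals.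 For $a<b$, the equal-revenue binary signal $S^E_{a,b}$ puts mass $1-a/b$ on $a$ and $a/b$ on $b$. A singleton signal on $v_i$ puts mass $1$ on $v_i$. Split-and-Match procedure. 1. Initialize $g_i=t_i=\tfrac12 f_{\mathcal{D}}(v_i)$ for all $i$. 2. Repeat: - let $s$ be the smallest index with $g_s>0$; - let $\ell$ be the smallest index $>s$ with $t_\ell>0$; - if no such pair $(s,\ell)$ exists, stop; - otherwise add the signal $S^E_{v_s,v_\ell}$ with weight $\gamma=\min\{g_s/(1-v_s/v_\ell),\ t_\ell/(v_s/v_\ell)\}$; - set $g_s\leftarrow g_s-\gamma(1-v_s/v_\ell)$ and $t_\ell\leftarrow t_\ell-\gamma v_s/v_\ell$. 3. Finally, the remaining (unused) mass of $\mathcal{D}$ at each $v_i$ is covered by a singleton signal on $v_i$ with that weight. The result is $\mathcal{Z}_0$. *)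

theory Defs
  imports "HOL-Analysis.Analysis"
begin

text \<open>Values are indexed: value v_i is \<open>v i\<close> for \<open>i \<in> {1..n}\<close>; the prior puts mass
  \<open>f i\<close> on \<open>v i\<close>.  A signal is a distribution on the values, represented by its mass
  function on the indices \<open>{1..n}\<close>.\<close>

type_synonym signal = "nat \<Rightarrow> real"
type_synonym scheme = "(signal \<times> real) list"

definition cdf :: "(nat \<Rightarrow> real) \<Rightarrow> nat \<Rightarrow> real" where
  "cdf f k = (\<Sum>j\<in>{1..k}. f j)"

definition supp_sig :: "nat \<Rightarrow> signal \<Rightarrow> nat set" where
  "supp_sig n S = {i \<in> {1..n}. S i > 0}"

definition Gsig :: "nat \<Rightarrow> (nat \<Rightarrow> real) \<Rightarrow> signal \<Rightarrow> real \<Rightarrow> real" where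
  "Gsig n v S p = (\<Sum>j\<in>{1..n}. if v j \<ge> p then S j else 0)"

text \<open>Posted price: smallest value in the support maximizing revenue \<open>p G_S(p)\<close>
  (values are strictly increasing in the index, so smallest index = smallest value).\<close>
definition price :: "nat \<Rightarrow> (nat \<Rightarrow> real) \<Rightarrow> signal \<Rightarrow> real" where
  "price n v S = v (LEAST i. i \<in> supp_sig n S \<and>
      (\<forall>j\<in>supp_sig n S. v j * Gsig n v S (v j) \<le> v i * Gsig n v S (v i)))"

definition cs_sig :: "nat \<Rightarrow> (nat \<Rightarrow> real) \<Rightarrow> signal \<Rightarrow> real \<Rightarrow> real" where
  "cs_sig n v S x = (if x \<ge> price n v S then x - price n v S else 0)"

definition cs_scheme :: "nat \<Rightarrow> (nat \<Rightarrow> real) \<Rightarrow> (nat \<Rightarrow> real) \<Rightarrow> scheme \<Rightarrow> nat \<Rightarrow> real" where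
  "cs_scheme n v f Z i =
     sum_list (map (\<lambda>(S, \<gamma>). cs_sig n v S (v i) * \<gamma> * S i / f i) Z)"

definition surplus_mass :: "nat \<Rightarrow> (nat \<Rightarrow> real) \<Rightarrow> (nat \<Rightarrow> real) \<Rightarrow> scheme \<Rightarrow> real \<Rightarrow> real" where
  "surplus_mass n v f Z x =
     (\<Sum>i\<in>{1..n}. if cdf f (i - 1) < x \<and> x \<le> cdf f i then cs_scheme n v f Z i else 0)"

definition eq_rev_sig :: "(nat \<Rightarrow> real) \<Rightarrow> nat \<Rightarrow> nat \<Rightarrow> signal" where
  "eq_rev_sig v a b = (\<lambda>i. if i = a then 1 - v a / v b else if i = b then v a / v b else 0)"

definition singleton_sig :: "nat \<Rightarrow> signal" where
  "singleton_sig a = (\<lambda>i. if i = a then 1 else 0)"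

definition sm_step :: "nat \<Rightarrow> (nat \<Rightarrow> real) \<Rightarrow>
    (nat \<Rightarrow> real) \<times> (nat \<Rightarrow> real) \<times> scheme \<Rightarrow> (nat \<Rightarrow> real) \<times> (nat \<Rightarrow> real) \<times> scheme" where
  "sm_step n v st = (case st of (g, t, L) \<Rightarrow>
     (if \<exists>s\<in>{1..n}. g s > 0 then
        (let s = (LEAST s. s \<in> {1..n} \<and> g s > 0) in
         if \<exists>l\<in>{s<..n}. t l > 0 then
           (let l = (LEAST l. l \<in> {s<..n} \<and> t l > 0);
                r = v s / v l;
                \<gamma> = min (g s / (1 - r)) (t l / r)
            in (g(s := g s - \<gamma> * (1 - r)), t(l := t l - \<gamma> * r), L @ [(eq_rev_sig v s l, \<gamma>)]))
         else (g, t, L))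
      else (g, t, L)))"

definition sm_init :: "nat \<Rightarrow> (nat \<Rightarrow> real) \<Rightarrow> (nat \<Rightarrow> real) \<times> (nat \<Rightarrow> real) \<times> scheme" where
  "sm_init n f = ((\<lambda>i. if i \<in> {1..n} then f i / 2 else 0),
                  (\<lambda>i. if i \<in> {1..n} then f i / 2 else 0), [])"

text \<open>Each effective step sets one of the 2n coordinates g_s, t_l to zero (and they never
  become positive again), so the loop stops after at most 2n steps; afterwards \<open>sm_step\<close> is
  the identity.\<close>
definition split_and_match :: "nat \<Rightarrow> (nat \<Rightarrow> real) \<Rightarrow> (nat \<Rightarrow> real) \<Rightarrow> scheme" where
  "split_and_match n v f = (case (sm_step n v ^^ (2 * n)) (sm_init n f) of (g, t, L) \<Rightarrow>
      L @ map (\<lambda>i. (singleton_sig i, g i + t i)) [1..<n+1])"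

end

theory Submission
  imports Defs
begin

(* Every signal of Z_0 other than an equal-revenue signal S^E_{v_s,v_l} is a singleton and creates
   no surplus.  Record the equal-revenue signals as matches (s, l, gamma): such a signal is priced
   at v_s and leaves surplus v_l - v_s to the mass gamma v_s / v_l it takes from v_l, and this
   surplus also equals v_s times the mass gamma (1 - v_s / v_l) it takes from v_s.  So the integral
   up to F(v_k) is the total surplus W of the matches with l <= k.

   When the loop has stopped, let sigma <= k be the least index whose low half is not completely
   used by matches ending at or below k.  Then the low halves below sigma are exhausted by such
   matches, and the high halves of sigma < i <= k are exhausted by matches with low end at most
   sigma.  Hence v_i f_i / 2 (for i < sigma) and (v_i - v_sigma) f_i / 2 (for i > sigma) are both
   bounded by surplus of matches ending at or below k, counted once by low end and once by high
   end, which gives V_k - v_sigma (f_sigma + ... + f_k) <= 4 W. *)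

lemma cdf_0 [simp]: "cdf f 0 = 0"
  by (simp add: cdf_def)

lemma cdf_Suc: "cdf f (Suc k) = cdf f k + f (Suc k)"
  by (simp add: cdf_def)

lemma cdf_mono:
  assumes "\<And>i. i \<in> {1..n} \<Longrightarrow> 0 \<le> f i" "i \<le> j" "j \<le> n"
  shows "cdf f i \<le> cdf f j"
  unfolding cdf_def by (rule sum_mono2) (use assms in auto)

lemma has_integral_cdf_step_function:
  fixes f c :: "nat \<Rightarrow> real"
  assumes f_nonneg: "\<And>i. i \<in> {1..n} \<Longrightarrow> 0 \<le> f i" and "k \<le> n"
  shows "((\<lambda>x. \<Sum>i\<in>{1..n}. if cdf f (i - 1) < x \<and> x \<le> cdf f i then c i else 0)
          has_integral (\<Sum>i\<in>{1..k}. f i * c i)) {0..cdf f k}"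
  using \<open>k \<le> n\<close>
proof (induction k)
  case 0
  then show ?case by (simp add: has_integral_refl(2))
next
  case (Suc k)
  let ?h = "\<lambda>x. \<Sum>i\<in>{1..n}. if cdf f (i - 1) < x \<and> x \<le> cdf f i then c i else 0"
  note mono = cdf_mono[OF f_nonneg]
  have F0: "0 \<le> cdf f k" and F1: "cdf f k \<le> cdf f (Suc k)"
    using mono[where i=0 and j=k] mono[where i=k and j="Suc k"] Suc.prems by auto
  have eq: "?h x = c (Suc k)" if x: "x \<in> {cdf f k..cdf f (Suc k)} - {cdf f k}" for x
  proof -
    have "?h x = (\<Sum>i\<in>{1..n}. if i = Suc k then c i else 0)"
    proof (rule sum.cong)
      fix i assume i: "i \<in> {1..n}"
      consider "i \<le> k" | "i = Suc k" | "Suc k < i" by linarith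
      then show "(if cdf f (i - 1) < x \<and> x \<le> cdf f i then c i else 0)
          = (if i = Suc k then c i else 0)"
      proof cases
        case 1
        then have "cdf f i \<le> cdf f k" using Suc.prems mono[where i=i and j=k] by simp
        then show ?thesis using x 1 by auto
      next
        case 3
        then have "cdf f (Suc k) \<le> cdf f (i - 1)" using i mono[where i="Suc k" and j="i - 1"] by simp
        then show ?thesis using x 3 by auto
      qed (use x in auto)
    qed simp
    then show ?thesis using Suc.prems by simp
  qed
  have const: "((\<lambda>_. c (Suc k)) has_integral (f (Suc k) * c (Suc k))) {cdf f k..cdf f (Suc k)}"
    using has_integral_const_real[of "c (Suc k)" "cdf f k" "cdf f (Suc k)"] F1
    by (simp add: cdf_Suc mult.commute)
  have "(?h has_integral (f (Suc k) * c (Suc k))) {cdf f k..cdf f (Suc k)}"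
    by (rule has_integral_spike_finite[where S="{cdf f k}", OF _ eq const]) simp_all
  with Suc have "(?h has_integral (\<Sum>i\<in>{1..k}. f i * c i) + f (Suc k) * c (Suc k))
      {0..cdf f (Suc k)}"
    by (intro has_integral_combine[OF F0 F1]) simp_all
  then show ?case by (simp add: add.commute)
qed

lemma sum_sum_list_swap:
  "(\<Sum>i\<in>A. \<Sum>x\<leftarrow>xs. h i x) = (\<Sum>x\<leftarrow>xs. \<Sum>i\<in>A. h i x :: real)"
  by (induction xs) (simp_all add: sum.distrib)

lemma price_eq_rev_sig:
  assumes "1 \<le> s" "s < l" "l \<le> n" "0 < v s" "v s < v l"
  shows "price n v (eq_rev_sig v s l) = v s"
proof -
  let ?S = "eq_rev_sig v s l"
  have supp: "supp_sig n ?S = {s, l}"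
    using assms by (auto simp: supp_sig_def eq_rev_sig_def)
  have G: "Gsig n v ?S p = (if p \<le> v s then ?S s else 0) + (if p \<le> v l then ?S l else 0)" for p
    unfolding Gsig_def using assms
    by (subst sum.mono_neutral_right[of "{1..n}" "{s, l}"]) (auto simp: eq_rev_sig_def)
  have "v l * Gsig n v ?S (v l) = v s * Gsig n v ?S (v s)"
    using assms by (simp add: G) (simp add: eq_rev_sig_def)
  then have "(LEAST i. i \<in> supp_sig n ?S \<and>
      (\<forall>j\<in>supp_sig n ?S. v j * Gsig n v ?S (v j) \<le> v i * Gsig n v ?S (v i))) = s"
    using assms by (intro Least_equality) (auto simp: supp)
  then show ?thesis unfolding price_def by simp
qed

lemma price_singleton_sig:
  assumes "a \<in> {1..n}"
  shows "price n v (singleton_sig a) = v a"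
proof -
  have "supp_sig n (singleton_sig a) = {a}"
    using assms by (auto simp: supp_sig_def singleton_sig_def)
  then show ?thesis unfolding price_def by (subst Least_equality[where x=a]) auto
qed

type_synonym match = "nat \<times> nat \<times> real"

definition match_signal :: "(nat \<Rightarrow> real) \<Rightarrow> match \<Rightarrow> signal \<times> real" where
  "match_signal v = (\<lambda>(s, l, \<gamma>). (eq_rev_sig v s l, \<gamma>))"

definition match_surplus :: "(nat \<Rightarrow> real) \<Rightarrow> nat \<Rightarrow> nat \<Rightarrow> real \<Rightarrow> real" where
  "match_surplus v s l \<gamma> = (v l - v s) * \<gamma> * (v s / v l)"

definition low_mass :: "(nat \<Rightarrow> real) \<Rightarrow> match list \<Rightarrow> nat \<Rightarrow> real" where
  "low_mass v M i = (\<Sum>(s, l, \<gamma>)\<leftarrow>M. if s = i then \<gamma> * (1 - v s / v l) else 0)"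

definition high_mass :: "(nat \<Rightarrow> real) \<Rightarrow> match list \<Rightarrow> nat \<Rightarrow> real" where
  "high_mass v M i = (\<Sum>(s, l, \<gamma>)\<leftarrow>M. if l = i then \<gamma> * (v s / v l) else 0)"

definition surplus_upto :: "(nat \<Rightarrow> real) \<Rightarrow> match list \<Rightarrow> nat \<Rightarrow> real" where
  "surplus_upto v M k = (\<Sum>(s, l, \<gamma>)\<leftarrow>M. if l \<le> k then match_surplus v s l \<gamma> else 0)"

definition sm_stopped :: "nat \<Rightarrow> (nat \<Rightarrow> real) \<Rightarrow> (nat \<Rightarrow> real) \<Rightarrow> bool" where
  "sm_stopped n g t \<longleftrightarrow> (\<forall>s\<in>{1..n}. 0 < g s \<longrightarrow> (\<forall>l\<in>{s<..n}. t l \<le> 0))"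

definition positive_count :: "nat \<Rightarrow> (nat \<Rightarrow> real) \<Rightarrow> nat" where
  "positive_count n g = card {i \<in> {1..n}. 0 < g i}"

lemma positive_count_le: "positive_count n g \<le> n"
proof -
  have "card {i \<in> {1..n}. 0 < g i} \<le> card {1..n}"
    by (rule card_mono) auto
  then show ?thesis unfolding positive_count_def by simp
qed

lemma positive_count_mono:
  assumes "\<And>i. g' i \<le> g i"
  shows "positive_count n g' \<le> positive_count n g"
  unfolding positive_count_def
  by (rule card_mono) (auto dest: less_le_trans[OF _ assms])

lemma positive_count_strict_mono:
  assumes "\<And>i. g' i \<le> g i" "s \<in> {1..n}" "0 < g s" "g' s \<le> 0"
  shows "positive_count n g' < positive_count n g"
proof -
  have "{i \<in> {1..n}. 0 < g' i} \<subseteq> {i \<in> {1..n}. 0 < g i}"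
    by (auto dest: less_le_trans[OF _ assms(1)])
  moreover have "s \<in> {i \<in> {1..n}. 0 < g i} - {i \<in> {1..n}. 0 < g' i}"
    using assms(2-4) by auto
  ultimately show ?thesis
    unfolding positive_count_def by (intro psubset_card_mono) auto
qed

lemma positive_count_update_less:
  assumes "s \<in> {1..n}" "l \<in> {1..n}" "0 < g s" "0 < t l" "0 \<le> x" "0 \<le> y"
    and "g s \<le> x \<or> t l \<le> y"
  shows "positive_count n (g(s := g s - x)) + positive_count n (t(l := t l - y))
    < positive_count n g + positive_count n t"
proof -
  have le: "positive_count n (g(s := g s - x)) \<le> positive_count n g"
    "positive_count n (t(l := t l - y)) \<le> positive_count n t"
    using assms(5,6) by (intro positive_count_mono; simp)+
  from assms(7) show ?thesis
  proof
    assume "g s \<le> x"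
    then have "positive_count n (g(s := g s - x)) < positive_count n g"
      using assms(1,3,5) by (intro positive_count_strict_mono[where s = s]) simp_all
    with le show ?thesis by linarith
  next
    assume "t l \<le> y"
    then have "positive_count n (t(l := t l - y)) < positive_count n t"
      using assms(2,4,6) by (intro positive_count_strict_mono[where s = l]) simp_all
    with le show ?thesis by linarith
  qed
qed

lemma min_match_weight:
  fixes a b r :: real
  assumes "0 < r" "r < 1" "0 \<le> a" "0 \<le> b"
  defines "\<gamma> \<equiv> min (a / (1 - r)) (b / r)"
  shows "0 \<le> \<gamma>" "\<gamma> * (1 - r) \<le> a" "\<gamma> * r \<le> b" "\<gamma> * (1 - r) = a \<or> \<gamma> * r = b"
  using assms by (auto simp: min_def field_simps)

lemma sm_step_stopped:
  assumes "sm_stopped n g t"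
  shows "sm_step n v (g, t, L) = (g, t, L)"
proof (cases "\<exists>s\<in>{1..n}. 0 < g s")
  case True
  define s where "s = (LEAST s. s \<in> {1..n} \<and> 0 < g s)"
  have "s \<in> {1..n} \<and> 0 < g s" unfolding s_def by (rule LeastI_ex) (use True in auto)
  then have "\<not> (\<exists>l\<in>{s<..n}. 0 < t l)" using assms unfolding sm_stopped_def by force
  then show ?thesis unfolding sm_step_def s_def by (simp add: Let_def)
qed (simp add: sm_step_def)

lemma sm_step_match:
  assumes "\<exists>s\<in>{1..n}. 0 < g s" "s = (LEAST s. s \<in> {1..n} \<and> 0 < g s)"
    and "\<exists>l\<in>{s<..n}. 0 < t l" "l = (LEAST l. l \<in> {s<..n} \<and> 0 < t l)"
    and "\<gamma> = min (g s / (1 - v s / v l)) (t l / (v s / v l))"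
  shows "sm_step n v (g, t, L) =
    (g(s := g s - \<gamma> * (1 - v s / v l)), t(l := t l - \<gamma> * (v s / v l)), L @ [(eq_rev_sig v s l, \<gamma>)])"
  using assms unfolding sm_step_def by (simp add: Let_def)

locale sm_instance =
  fixes n :: nat and v f :: "nat \<Rightarrow> real"
  assumes v_pos: "i \<in> {1..n} \<Longrightarrow> 0 < v i"
    and v_mono: "1 \<le> i \<Longrightarrow> i < j \<Longrightarrow> j \<le> n \<Longrightarrow> v i < v j"
    and f_pos: "i \<in> {1..n} \<Longrightarrow> 0 < f i"
begin

lemma v_le: "1 \<le> i \<Longrightarrow> i \<le> j \<Longrightarrow> j \<le> n \<Longrightarrow> v i \<le> v j"
  using v_mono[of i j] by (cases "i = j") auto

lemma cs_eq_rev_sig: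
  assumes "1 \<le> s" "s < l" "l \<le> n"
  shows "cs_sig n v (eq_rev_sig v s l) (v i) * \<gamma> * eq_rev_sig v s l i / f i
    = (if i = l then match_surplus v s l \<gamma> / f i else 0)"
  using assms price_eq_rev_sig[OF assms, of v] v_pos[of s] v_mono[of s l]
  by (auto simp: cs_sig_def eq_rev_sig_def match_surplus_def)

lemma cs_singleton_sig:
  assumes "a \<in> {1..n}"
  shows "cs_sig n v (singleton_sig a) (v i) * singleton_sig a i = 0"
  using price_singleton_sig[OF assms] by (simp add: cs_sig_def singleton_sig_def)

end

text \<open>The last three conditions hold because each match \<open>(s, l, \<gamma>)\<close> is made with \<open>s\<close> the least
  index of positive \<open>g\<close> and \<open>l\<close> the least index above \<open>s\<close> of positive \<open>t\<close>, while \<open>g\<close> and \<open>t\<close>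
  only decrease.\<close>

locale sm_state = sm_instance +
  fixes g t :: "nat \<Rightarrow> real" and M :: "match list"
  assumes g_nonneg: "0 \<le> g i"
    and t_nonneg: "0 \<le> t i"
    and low_mass_eq: "i \<in> {1..n} \<Longrightarrow> low_mass v M i = f i / 2 - g i"
    and high_mass_eq: "i \<in> {1..n} \<Longrightarrow> high_mass v M i = f i / 2 - t i"
    and match_range: "(s, l, \<gamma>) \<in> set M \<Longrightarrow> 1 \<le> s \<and> s < l \<and> l \<le> n \<and> 0 \<le> \<gamma>"
    and exhausted_below: "(s, l, \<gamma>) \<in> set M \<Longrightarrow> 1 \<le> s' \<Longrightarrow> s' < s \<Longrightarrow> g s' = 0"
    and exhausted_between: "(s, l, \<gamma>) \<in> set M \<Longrightarrow> s < l' \<Longrightarrow> l' < l \<Longrightarrow> t l' = 0"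
    and matches_mono: "(s, l, \<gamma>) \<in> set M \<Longrightarrow> (s', l', \<gamma>') \<in> set M \<Longrightarrow> s < s' \<Longrightarrow> l \<le> l'"
begin

lemma matches_mono_append:
  assumes "1 \<le> s" "s < l" "0 < g s" "0 < t l"
    and "(s1, l1, \<gamma>1) \<in> set (M @ [(s, l, \<gamma>)])" "(s2, l2, \<gamma>2) \<in> set (M @ [(s, l, \<gamma>)])" "s1 < s2"
  shows "l1 \<le> l2"
proof -
  have "\<not> s < s2" if "(s2, l2, \<gamma>2) \<in> set M"
    using exhausted_below[OF that, of s] assms(1,3) by auto
  moreover have "l1 \<le> l" if "(s1, l1, \<gamma>1) \<in> set M" "s1 < s"
    using exhausted_between[OF that(1), of l] that(2) assms(2,4) by force
  ultimately show ?thesis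
    using assms(5-7) matches_mono by auto
qed

lemma sm_state_append_match:
  assumes s: "s \<in> {1..n}" "0 < g s" "\<And>s'. 1 \<le> s' \<Longrightarrow> s' < s \<Longrightarrow> g s' \<le> 0"
    and l: "l \<in> {s<..n}" "0 < t l" "\<And>l'. s < l' \<Longrightarrow> l' < l \<Longrightarrow> t l' \<le> 0"
    and \<gamma>: "0 \<le> \<gamma>" "\<gamma> * (1 - v s / v l) \<le> g s" "\<gamma> * (v s / v l) \<le> t l"
  shows "sm_state n v f (g(s := g s - \<gamma> * (1 - v s / v l))) (t(l := t l - \<gamma> * (v s / v l)))
    (M @ [(s, l, \<gamma>)])"
proof -
  define g' where "g' = g(s := g s - \<gamma> * (1 - v s / v l))"
  define t' where "t' = t(l := t l - \<gamma> * (v s / v l))"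
  let ?M' = "M @ [(s, l, \<gamma>)]"
  have ratio: "0 < v s / v l" "v s / v l < 1"
    using s l v_pos[of s] v_mono[of s l] by auto
  have "0 \<le> \<gamma> * (1 - v s / v l)" "0 \<le> \<gamma> * (v s / v l)"
    using \<gamma>(1) ratio by (intro mult_nonneg_nonneg; simp)+
  then have g': "0 \<le> g' i" "g' i \<le> g i" and t': "0 \<le> t' i" "t' i \<le> t i" for i
    using g_nonneg[of i] t_nonneg[of i] \<gamma>(2,3) by (auto simp: g'_def t'_def)
  have below': "g' s' = 0" if "(s0, l0, \<gamma>0) \<in> set ?M'" "1 \<le> s'" "s' < s0" for s0 l0 \<gamma>0 s'
  proof (cases "(s0, l0, \<gamma>0) \<in> set M")
    case True
    then show ?thesis using exhausted_below[OF True that(2,3)] g'[of s'] by simp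
  next
    case False
    then have "s0 = s" using that(1) by simp
    then show ?thesis using that s(3)[of s'] g_nonneg[of s'] by (simp add: g'_def)
  qed
  have between': "t' l' = 0" if "(s0, l0, \<gamma>0) \<in> set ?M'" "s0 < l'" "l' < l0" for s0 l0 \<gamma>0 l'
  proof (cases "(s0, l0, \<gamma>0) \<in> set M")
    case True
    then show ?thesis using exhausted_between[OF True that(2,3)] t'[of l'] by simp
  next
    case False
    then have "s0 = s" "l0 = l" using that(1) by simp_all
    then show ?thesis using that l(3)[of l'] t_nonneg[of l'] by (simp add: t'_def)
  qed
  have "sm_state n v f g' t' ?M'"
  proof (intro sm_state.intro sm_instance_axioms sm_state_axioms.intro)
    fix i assume i: "i \<in> {1..n}"
    have "low_mass v ?M' i = low_mass v M i + (if s = i then \<gamma> * (1 - v s / v l) else 0)"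
      by (simp add: low_mass_def)
    then show "low_mass v ?M' i = f i / 2 - g' i"
      using low_mass_eq[OF i] by (simp add: g'_def)
    have "high_mass v ?M' i = high_mass v M i + (if l = i then \<gamma> * (v s / v l) else 0)"
      by (simp add: high_mass_def)
    then show "high_mass v ?M' i = f i / 2 - t' i"
      using high_mass_eq[OF i] by (simp add: t'_def)
  next
    fix s0 l0 \<gamma>0 assume "(s0, l0, \<gamma>0) \<in> set ?M'"
    then show "1 \<le> s0 \<and> s0 < l0 \<and> l0 \<le> n \<and> 0 \<le> \<gamma>0"
      using match_range s l \<gamma> by auto
  next
    fix s1 l1 \<gamma>1 s2 l2 \<gamma>2
    assume "(s1, l1, \<gamma>1) \<in> set ?M'" "(s2, l2, \<gamma>2) \<in> set ?M'" "s1 < s2"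
    then show "l1 \<le> l2"
      by (rule matches_mono_append[rotated 4]) (use s l in auto)
  qed (fact g' t' below' between')+
  then show ?thesis unfolding g'_def t'_def .
qed

lemma sm_step_progress:
  assumes "\<not> sm_stopped n g t"
  obtains g' t' M' where
    "sm_step n v (g, t, map (match_signal v) M) = (g', t', map (match_signal v) M')"
    "sm_state n v f g' t' M'"
    "positive_count n g' + positive_count n t' < positive_count n g + positive_count n t"
proof -
  from assms obtain s1 l1 where s1: "s1 \<in> {1..n}" "0 < g s1" and l1: "l1 \<in> {s1<..n}" "0 < t l1"
    unfolding sm_stopped_def by (auto simp: not_le)
  have ex_s: "\<exists>s\<in>{1..n}. 0 < g s" using s1 by blast
  define s where "s = (LEAST s. s \<in> {1..n} \<and> 0 < g s)"
  have s: "s \<in> {1..n}" "0 < g s"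
    unfolding s_def by (rule LeastI2_ex[OF ex_s[unfolded Bex_def]]; simp)+
  have "s \<le> s1" unfolding s_def by (rule Least_le) (use s1 in simp)
  have s_least: "g s' \<le> 0" if "1 \<le> s'" "s' < s" for s'
    using not_less_Least[of s' "\<lambda>s. s \<in> {1..n} \<and> 0 < g s"] that s by (auto simp: s_def)
  have ex_l: "\<exists>l\<in>{s<..n}. 0 < t l" using l1 \<open>s \<le> s1\<close> by force
  define l where "l = (LEAST l. l \<in> {s<..n} \<and> 0 < t l)"
  have l: "l \<in> {s<..n}" "0 < t l"
    unfolding l_def by (rule LeastI2_ex[OF ex_l[unfolded Bex_def]]; simp)+
  have l_least: "t l' \<le> 0" if "s < l'" "l' < l" for l'
    using not_less_Least[of l' "\<lambda>l. l \<in> {s<..n} \<and> 0 < t l"] that l by (auto simp: l_def)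
  define r where "r = v s / v l"
  define \<gamma> where "\<gamma> = min (g s / (1 - r)) (t l / r)"
  have r: "0 < r" "r < 1"
    using s l v_pos[of s] v_mono[of s l] by (auto simp: r_def)
  note \<gamma> = min_match_weight[OF r g_nonneg t_nonneg, of s l, folded \<gamma>_def]
  have "sm_step n v (g, t, map (match_signal v) M)
      = (g(s := g s - \<gamma> * (1 - r)), t(l := t l - \<gamma> * r), map (match_signal v) (M @ [(s, l, \<gamma>)]))"
    using sm_step_match[OF ex_s s_def ex_l l_def] by (simp add: \<gamma>_def r_def match_signal_def)
  moreover have "sm_state n v f (g(s := g s - \<gamma> * (1 - r))) (t(l := t l - \<gamma> * r)) (M @ [(s, l, \<gamma>)])"
    using sm_state_append_match[OF s s_least l l_least] \<gamma> unfolding r_def by blast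
  moreover have "positive_count n (g(s := g s - \<gamma> * (1 - r))) + positive_count n (t(l := t l - \<gamma> * r))
      < positive_count n g + positive_count n t"
    using s l \<gamma> r by (intro positive_count_update_less) auto
  ultimately show ?thesis by (rule that)
qed

end

context sm_instance
begin

lemma sm_state_init:
  "sm_state n v f (\<lambda>i. if i \<in> {1..n} then f i / 2 else 0) (\<lambda>i. if i \<in> {1..n} then f i / 2 else 0) []"
  by unfold_locales (use f_pos in \<open>auto simp: low_mass_def high_mass_def less_imp_le\<close>)

lemma sm_iterate:
  "\<exists>g t M. (sm_step n v ^^ j) (sm_init n f) = (g, t, map (match_signal v) M) \<and> sm_state n v f g t M \<and>
     (sm_stopped n g t \<or> positive_count n g + positive_count n t + j \<le> 2 * n)"
proof (induction j)
  case 0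
  let ?h = "\<lambda>i. if i \<in> {1..n} then f i / 2 else 0"
  have "positive_count n ?h + positive_count n ?h + 0 \<le> 2 * n"
    using positive_count_le[of n ?h] by simp
  then show ?case
    using sm_state_init by (auto simp: sm_init_def intro!: exI[of _ "[]"])
next
  case (Suc j)
  then obtain g t M where
    st: "(sm_step n v ^^ j) (sm_init n f) = (g, t, map (match_signal v) M)" and
    inv: "sm_state n v f g t M" and
    bound: "sm_stopped n g t \<or> positive_count n g + positive_count n t + j \<le> 2 * n"
    by blast
  show ?case
  proof (cases "sm_stopped n g t")
    case True
    then show ?thesis using st inv sm_step_stopped[OF True] by auto
  next
    case False
    obtain g' t' M' where
      "sm_step n v (g, t, map (match_signal v) M) = (g', t', map (match_signal v) M')"
      "sm_state n v f g' t' M'"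
      "positive_count n g' + positive_count n t' < positive_count n g + positive_count n t"
      by (rule sm_state.sm_step_progress[OF inv False])
    then show ?thesis using st bound False by auto
  qed
qed

lemma split_and_match_final:
  obtains g t M where
    "split_and_match n v f = map (match_signal v) M @ map (\<lambda>i. (singleton_sig i, g i + t i)) [1..<n+1]"
    "sm_state n v f g t M" "sm_stopped n g t"
proof -
  obtain g t M where
    st: "(sm_step n v ^^ (2 * n)) (sm_init n f) = (g, t, map (match_signal v) M)" and
    inv: "sm_state n v f g t M" and
    bound: "sm_stopped n g t \<or> positive_count n g + positive_count n t + 2 * n \<le> 2 * n"
    using sm_iterate by blast
  have "sm_stopped n g t"
  proof (cases "positive_count n g = 0")
    case True
    then have "{i \<in> {1..n}. 0 < g i} = {}" by (simp add: positive_count_def)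
    then show ?thesis by (auto simp: sm_stopped_def)
  qed (use bound in simp)
  with st inv show ?thesis by (intro that) (simp_all add: split_and_match_def)
qed

end

context sm_state
begin

lemma match_surplus_nonneg:
  assumes "(s, l, \<gamma>) \<in> set M"
  shows "0 \<le> match_surplus v s l \<gamma>"
  using match_range[OF assms] v_pos[of s] v_mono[of s l] by (simp add: match_surplus_def)

lemma sum_matches_by_high_end:
  "(\<Sum>i\<in>{1..k}. \<Sum>(s, l, \<gamma>)\<leftarrow>M. if l = i then match_surplus v s l \<gamma> else 0) = surplus_upto v M k"
  unfolding sum_sum_list_swap surplus_upto_def
proof (rule arg_cong[where f = sum_list], rule map_cong[OF refl])
  fix e assume "e \<in> set M"
  then obtain s l \<gamma> where "e = (s, l, \<gamma>)" "1 \<le> s" "s < l"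
    by (metis match_range prod_cases3)
  then show "(\<Sum>i\<in>{1..k}. case e of (s, l, \<gamma>) \<Rightarrow> if l = i then match_surplus v s l \<gamma> else 0)
      = (case e of (s, l, \<gamma>) \<Rightarrow> if l \<le> k then match_surplus v s l \<gamma> else 0)"
    by auto
qed

lemma sum_matches_by_low_end:
  "(\<Sum>i\<in>{1..k}. \<Sum>(s, l, \<gamma>)\<leftarrow>M. if s = i \<and> l \<le> k then match_surplus v s l \<gamma> else 0)
    = surplus_upto v M k"
  unfolding sum_sum_list_swap surplus_upto_def
proof (rule arg_cong[where f = sum_list], rule map_cong[OF refl])
  fix e assume "e \<in> set M"
  then obtain s l \<gamma> where "e = (s, l, \<gamma>)" "1 \<le> s" "s < l"
    by (metis match_range prod_cases3)
  then show "(\<Sum>i\<in>{1..k}. case e of (s, l, \<gamma>) \<Rightarrow> if s = i \<and> l \<le> k then match_surplus v s l \<gamma> else 0)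
      = (case e of (s, l, \<gamma>) \<Rightarrow> if l \<le> k then match_surplus v s l \<gamma> else 0)"
    by (cases "l \<le> k") auto
qed

lemma cs_scheme_matches:
  assumes "i \<in> {1..n}"
  shows "f i * cs_scheme n v f (map (match_signal v) M @ map (\<lambda>i. (singleton_sig i, w i)) [1..<n+1]) i
    = (\<Sum>(s, l, \<gamma>)\<leftarrow>M. if l = i then match_surplus v s l \<gamma> else 0)"
proof -
  have "cs_scheme n v f (map (match_signal v) M @ map (\<lambda>i. (singleton_sig i, w i)) [1..<n+1]) i
      = (\<Sum>(s, l, \<gamma>)\<leftarrow>M. if l = i then match_surplus v s l \<gamma> / f i else 0)"
  proof -
    have "(\<Sum>(S, \<gamma>)\<leftarrow>map (\<lambda>i. (singleton_sig i, w i)) [1..<n+1]. cs_sig n v S (v i) * \<gamma> * S i / f i)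
        = (\<Sum>a\<leftarrow>[1..<n+1]. 0)"
      unfolding map_map
      by (intro arg_cong[where f = sum_list] map_cong) (use cs_singleton_sig in force)+
    moreover have "(\<Sum>(S, \<gamma>)\<leftarrow>map (match_signal v) M. cs_sig n v S (v i) * \<gamma> * S i / f i)
        = (\<Sum>(s, l, \<gamma>)\<leftarrow>M. if l = i then match_surplus v s l \<gamma> / f i else 0)"
      unfolding map_map
    proof (rule arg_cong[where f = sum_list], rule map_cong[OF refl])
      fix e assume "e \<in> set M"
      moreover obtain s l \<gamma> where "e = (s, l, \<gamma>)" by (cases e)
      ultimately show "((\<lambda>(S, \<gamma>). cs_sig n v S (v i) * \<gamma> * S i / f i) \<circ> match_signal v) e
          = (case e of (s, l, \<gamma>) \<Rightarrow> if l = i then match_surplus v s l \<gamma> / f i else 0)"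
        using match_range cs_eq_rev_sig by (auto simp: match_signal_def)
    qed
    ultimately show ?thesis by (simp add: cs_scheme_def)
  qed
  also have "f i * \<dots> = (\<Sum>(s, l, \<gamma>)\<leftarrow>M. if l = i then match_surplus v s l \<gamma> else 0)"
    unfolding sum_list_const_mult[symmetric] using f_pos[OF assms]
    by (intro arg_cong[where f = sum_list] map_cong) auto
  finally show ?thesis .
qed

lemma integral_surplus_mass:
  assumes "k \<le> n"
  shows "integral {0..cdf f k}
      (surplus_mass n v f (map (match_signal v) M @ map (\<lambda>i. (singleton_sig i, w i)) [1..<n+1]))
    = surplus_upto v M k"
proof -
  let ?Z = "map (match_signal v) M @ map (\<lambda>i. (singleton_sig i, w i)) [1..<n+1]"
  have "integral {0..cdf f k} (surplus_mass n v f ?Z) = (\<Sum>i\<in>{1..k}. f i * cs_scheme n v f ?Z i)"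
    unfolding surplus_mass_def[abs_def]
    by (intro integral_unique has_integral_cdf_step_function) (use f_pos assms in \<open>auto intro: less_imp_le\<close>)
  also have "\<dots> = (\<Sum>i\<in>{1..k}. \<Sum>(s, l, \<gamma>)\<leftarrow>M. if l = i then match_surplus v s l \<gamma> else 0)"
    by (rule sum.cong[OF refl], rule cs_scheme_matches) (use assms in auto)
  also have "\<dots> = surplus_upto v M k"
    by (rule sum_matches_by_high_end)
  finally show ?thesis .
qed

lemma value_mul_low_mass:
  "v i * low_mass v M i = (\<Sum>(s, l, \<gamma>)\<leftarrow>M. if s = i then match_surplus v s l \<gamma> else 0)"
  unfolding low_mass_def sum_list_const_mult[symmetric]
proof (rule arg_cong[where f = sum_list], rule map_cong[OF refl])
  fix e assume "e \<in> set M"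
  then obtain s l \<gamma> where "e = (s, l, \<gamma>)" "l \<in> {1..n}"
    by (metis atLeastAtMost_iff match_range order.strict_trans1 less_imp_le prod_cases3)
  then show "v i * (case e of (s, l, \<gamma>) \<Rightarrow> if s = i then \<gamma> * (1 - v s / v l) else 0)
      = (case e of (s, l, \<gamma>) \<Rightarrow> if s = i then match_surplus v s l \<gamma> else 0)"
    using v_pos[of l] by (auto simp: match_surplus_def field_simps)
qed

lemma high_mass_gap_le:
  assumes "\<sigma> \<le> n" and high_ends: "\<And>s l \<gamma>. (s, l, \<gamma>) \<in> set M \<Longrightarrow> l = i \<Longrightarrow> s \<le> \<sigma>"
  shows "(v i - v \<sigma>) * high_mass v M i \<le> (\<Sum>(s, l, \<gamma>)\<leftarrow>M. if l = i then match_surplus v s l \<gamma> else 0)"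
  unfolding high_mass_def sum_list_const_mult[symmetric]
proof (rule sum_list_mono)
  fix e assume "e \<in> set M"
  then obtain s l \<gamma> where e: "e = (s, l, \<gamma>)" "(s, l, \<gamma>) \<in> set M" by (metis prod_cases3)
  show "(v i - v \<sigma>) * (case e of (s, l, \<gamma>) \<Rightarrow> if l = i then \<gamma> * (v s / v l) else 0)
      \<le> (case e of (s, l, \<gamma>) \<Rightarrow> if l = i then match_surplus v s l \<gamma> else 0)"
  proof (cases "l = i")
    case True
    have "1 \<le> s" "s < l" "l \<le> n" "0 \<le> \<gamma>" using match_range[OF e(2)] by auto
    then have "v s \<le> v \<sigma>" and "0 \<le> \<gamma> * (v s / v l)"
      using v_le[of s \<sigma>] high_ends[OF e(2) True] assms(1) v_pos[of s] v_pos[of l] by auto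
    then have "(v l - v \<sigma>) * (\<gamma> * (v s / v l)) \<le> (v l - v s) * (\<gamma> * (v s / v l))"
      by (intro mult_right_mono) auto
    then show ?thesis using e True by (simp add: match_surplus_def mult.assoc)
  qed (simp add: e)
qed

lemma stopped_threshold:
  assumes stopped: "sm_stopped n g t" and k: "k \<in> {1..n}"
  obtains \<sigma> where "\<sigma> \<in> {1..k}"
    and "\<And>i. 1 \<le> i \<Longrightarrow> i < \<sigma> \<Longrightarrow> g i = 0"
    and "\<And>i l \<gamma>. (i, l, \<gamma>) \<in> set M \<Longrightarrow> i < \<sigma> \<Longrightarrow> l \<le> k"
    and "\<And>s l \<gamma>. (s, l, \<gamma>) \<in> set M \<Longrightarrow> l \<le> k \<Longrightarrow> s \<le> \<sigma>"
    and "\<And>i. \<sigma> < i \<Longrightarrow> i \<le> k \<Longrightarrow> t i = 0"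
proof -
  define escapes where "escapes s \<longleftrightarrow> 0 < g s \<or> (\<exists>l \<gamma>. (s, l, \<gamma>) \<in> set M \<and> k < l)" for s
  have "escapes k"
  proof (rule ccontr)
    assume not_escapes: "\<not> escapes k"
    have "low_mass v M k = (\<Sum>e\<leftarrow>M. 0)"
      unfolding low_mass_def
    proof (rule arg_cong[where f = sum_list], rule map_cong[OF refl])
      fix e assume "e \<in> set M"
      then obtain s l \<gamma> where "e = (s, l, \<gamma>)" "(s, l, \<gamma>) \<in> set M" by (metis prod_cases3)
      then show "(case e of (s, l, \<gamma>) \<Rightarrow> if s = k then \<gamma> * (1 - v s / v l) else 0) = 0"
        using not_escapes match_range[of s l \<gamma>] by (auto simp: escapes_def)
    qed
    moreover have "g k = 0" using not_escapes g_nonneg[of k] by (auto simp: escapes_def)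
    ultimately show False using low_mass_eq[OF k] f_pos[OF k] by simp
  qed
  define \<sigma> where "\<sigma> = (LEAST s. 1 \<le> s \<and> escapes s)"
  have \<sigma>: "1 \<le> \<sigma>" "escapes \<sigma>" "\<sigma> \<le> k"
    using LeastI[of "\<lambda>s. 1 \<le> s \<and> escapes s" k] Least_le[of "\<lambda>s. 1 \<le> s \<and> escapes s" k] \<open>escapes k\<close> k
    unfolding \<sigma>_def by auto
  have before: "\<not> escapes i" if "1 \<le> i" "i < \<sigma>" for i
    using not_less_Least[of i "\<lambda>s. 1 \<le> s \<and> escapes s"] that unfolding \<sigma>_def by auto
  show ?thesis
  proof (rule that)
    show "\<sigma> \<in> {1..k}" using \<sigma> by simp
    show "g i = 0" if "1 \<le> i" "i < \<sigma>" for i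
      using before[OF that] g_nonneg[of i] by (auto simp: escapes_def)
    show "l \<le> k" if "(i, l, \<gamma>) \<in> set M" "i < \<sigma>" for i l \<gamma>
      using before[of i] match_range[OF that(1)] that by (auto simp: escapes_def not_less)
    show "s \<le> \<sigma>" if e: "(s, l, \<gamma>) \<in> set M" "l \<le> k" for s l \<gamma>
    proof (rule ccontr)
      assume "\<not> s \<le> \<sigma>"
      from \<sigma>(2) consider "0 < g \<sigma>" | l' \<gamma>' where "(\<sigma>, l', \<gamma>') \<in> set M" "k < l'"
        by (auto simp: escapes_def)
      then show False
      proof cases
        case 1
        then show False using exhausted_below[OF e(1), of \<sigma>] \<sigma> \<open>\<not> s \<le> \<sigma>\<close> by simp
      next
        case 2
        then show False using matches_mono[OF 2(1) e(1)] \<open>\<not> s \<le> \<sigma>\<close> e(2) by simp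
      qed
    qed
    show "t i = 0" if "\<sigma> < i" "i \<le> k" for i
    proof -
      from \<sigma>(2) consider "0 < g \<sigma>" | l' \<gamma>' where "(\<sigma>, l', \<gamma>') \<in> set M" "k < l'"
        by (auto simp: escapes_def)
      then show ?thesis
      proof cases
        case 1
        then have "t i \<le> 0" using stopped \<sigma> that k by (auto simp: sm_stopped_def)
        then show ?thesis using t_nonneg[of i] by simp
      next
        case 2
        then show ?thesis using exhausted_between[OF 2(1), of i] that by simp
      qed
    qed
  qed
qed

lemma revenue_gap_le_surplus_upto:
  assumes "sm_stopped n g t" and k: "k \<in> {1..n}"
  shows "(\<Sum>i\<in>{1..k}. v i * f i) - Max ((\<lambda>i. v i * (\<Sum>j\<in>{i..k}. f j)) ` {1..k})
    \<le> 4 * surplus_upto v M k"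
proof -
  obtain \<sigma> where \<sigma>: "\<sigma> \<in> {1..k}"
    and low: "\<And>i. 1 \<le> i \<Longrightarrow> i < \<sigma> \<Longrightarrow> g i = 0"
    and low_ends: "\<And>i l \<gamma>. (i, l, \<gamma>) \<in> set M \<Longrightarrow> i < \<sigma> \<Longrightarrow> l \<le> k"
    and high_ends: "\<And>s l \<gamma>. (s, l, \<gamma>) \<in> set M \<Longrightarrow> l \<le> k \<Longrightarrow> s \<le> \<sigma>"
    and high: "\<And>i. \<sigma> < i \<Longrightarrow> i \<le> k \<Longrightarrow> t i = 0"
    using stopped_threshold[OF assms] by blast
  define A where "A i = (\<Sum>(s, l, \<gamma>)\<leftarrow>M. if s = i \<and> l \<le> k then match_surplus v s l \<gamma> else 0)" for i
  define B where "B i = (\<Sum>(s, l, \<gamma>)\<leftarrow>M. if l = i then match_surplus v s l \<gamma> else 0)" for i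
  have A_nonneg: "0 \<le> A i" and B_nonneg: "0 \<le> B i" for i
    unfolding A_def B_def by (auto intro!: sum_list_nonneg simp: match_surplus_nonneg)
  have "v i * f i - (if \<sigma> \<le> i then v \<sigma> * f i else 0) \<le> 2 * (A i + B i)" if i: "i \<in> {1..k}" for i
  proof -
    have i_n: "i \<in> {1..n}" using i k by auto
    consider "i < \<sigma>" | "i = \<sigma>" | "\<sigma> < i" by linarith
    then show ?thesis
    proof cases
      case 1
      have "v i * f i = 2 * (v i * low_mass v M i)"
        using low_mass_eq[OF i_n] low[of i] i 1 by simp
      also have "v i * low_mass v M i = A i"
        unfolding value_mul_low_mass A_def
        by (intro arg_cong[where f = sum_list] map_cong) (auto dest: low_ends[OF _ 1])
      finally show ?thesis using 1 B_nonneg[of i] by simp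
    next
      case 2
      then show ?thesis using A_nonneg[of i] B_nonneg[of i] by simp
    next
      case 3
      have "(v i - v \<sigma>) * f i = 2 * ((v i - v \<sigma>) * high_mass v M i)"
        using high_mass_eq[OF i_n] high[of i] i 3 by simp
      also have "(v i - v \<sigma>) * high_mass v M i \<le> B i"
        unfolding B_def using high_ends i \<sigma> k by (intro high_mass_gap_le) auto
      finally show ?thesis using 3 A_nonneg[of i] by (simp add: algebra_simps)
    qed
  qed
  note pointwise = this
  have "{i \<in> {1..k}. \<sigma> \<le> i} = {\<sigma>..k}" using \<sigma> by auto
  then have "(\<Sum>i\<in>{1..k}. v i * f i) - v \<sigma> * (\<Sum>j\<in>{\<sigma>..k}. f j)
      = (\<Sum>i\<in>{1..k}. v i * f i - (if \<sigma> \<le> i then v \<sigma> * f i else 0))"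
    by (simp add: sum_subtractf sum.inter_filter[symmetric] sum_distrib_left)
  also have "\<dots> \<le> (\<Sum>i\<in>{1..k}. 2 * (A i + B i))"
    by (rule sum_mono) (rule pointwise)
  also have "\<dots> = 2 * ((\<Sum>i\<in>{1..k}. A i) + (\<Sum>i\<in>{1..k}. B i))"
    by (simp add: sum.distrib sum_distrib_left)
  also have "\<dots> = 4 * surplus_upto v M k"
    using sum_matches_by_low_end sum_matches_by_high_end by (simp add: A_def B_def)
  finally have "(\<Sum>i\<in>{1..k}. v i * f i) - v \<sigma> * (\<Sum>j\<in>{\<sigma>..k}. f j) \<le> 4 * surplus_upto v M k" .
  moreover have "v \<sigma> * (\<Sum>j\<in>{\<sigma>..k}. f j) \<le> Max ((\<lambda>i. v i * (\<Sum>j\<in>{i..k}. f j)) ` {1..k})"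
    by (rule Max_ge) (use \<sigma> in auto)
  ultimately show ?thesis by linarith
qed

end

theorem lemma4:
  fixes n :: nat and v f :: "nat \<Rightarrow> real" and k :: nat
  assumes v_pos: "0 < v 1"
    and v_mono: "\<And>i j. 1 \<le> i \<Longrightarrow> i < j \<Longrightarrow> j \<le> n \<Longrightarrow> v i < v j"
    and f_pos: "\<And>i. i \<in> {1..n} \<Longrightarrow> f i > 0"
    and f_sum: "(\<Sum>i\<in>{1..n}. f i) = 1"
    and k: "k \<in> {1..n}"
  shows "4 * integral {0..cdf f k} (surplus_mass n v f (split_and_match n v f))
           \<ge> (\<Sum>i\<in>{1..k}. v i * f i) - Max ((\<lambda>i. v i * (\<Sum>j\<in>{i..k}. f j)) ` {1..k})"
proof -
  have v_pos_all: "0 < v i" if "i \<in> {1..n}" for i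
    using v_pos v_mono[of 1 i] that by (cases "i = 1") auto
  interpret sm_instance n v f
    by unfold_locales (fact v_pos_all v_mono f_pos)+
  obtain g t M where
    Z: "split_and_match n v f = map (match_signal v) M @ map (\<lambda>i. (singleton_sig i, g i + t i)) [1..<n+1]"
    and state: "sm_state n v f g t M" and stopped: "sm_stopped n g t"
    by (rule split_and_match_final)
  have "integral {0..cdf f k} (surplus_mass n v f (split_and_match n v f)) = surplus_upto v M k"
    unfolding Z by (rule sm_state.integral_surplus_mass[OF state]) (use k in simp)
  with sm_state.revenue_gap_le_surplus_upto[OF state stopped k] show ?thesis by simp
qed

end
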